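(* Let $e\colon\mathbb{G}_1\times\mathbb{G}_1\to\mathbb{G}_2$ be a cryptographic pairing between groups of order $p$. Suppose the $(t,\epsilon)$-Computational Diffie-Hellman assumption holds in $\mathbb{G}_1$. Then $e$ is a $(t-O(1),\epsilon)$-one-way pairing.
   Context: A cryptographic pairing is a map $e\colon\mathbb{G}_1\times\mathbb{G}_1\to\mathbb{G}_2$ between cyclic groups of prime order $p$ that is bilinear ($e(x^a,y^b)=e(x,y)^{ab}$) and non-degenerate ($e(g,g)$ generates $\mathbb{G}_2$ whenever $g$ generates $\mathbb{G}_1$). The $(t,\epsilon)$-CDH assumption holds in $\mathbb{G}_1$ if there is no algorithm running in time at most $t$ that on input $(g,g^a,g^b)$ outputs $g^{ab}$ with probability at least $\epsilon$ over all choices of $(g,a,b)$. The pairing $e$ is a $(t,\epsilon)$-one-way pairing if for every algorithm $\mathcal{A}$ that takes as input $g\in\mathbb{G}_1$ and $x\in\mathbb{G}_2$, outputs an element of $\mathbb{G}_1$, and runs in time at most $t$, one has $\Pr[e(g,\mathcal{A}(g,x))=x]<\epsilon$, the probability over $g$ and $x$. *)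

theory Defs
  imports "HOL-Algebra.Generated_Groups" "HOL-Probability.Product_PMF"
begin

definition generators :: "('a, 'c) monoid_scheme \<Rightarrow> 'a set" where
  "generators G = {g \<in> carrier G. generate G {g} = carrier G}"

definition cyclic_of_prime_order :: "('a, 'c) monoid_scheme \<Rightarrow> nat \<Rightarrow> bool" where
  "cyclic_of_prime_order G p \<longleftrightarrow>
     group G \<and> prime p \<and> finite (carrier G) \<and> card (carrier G) = p \<and> generators G \<noteq> {}"

definition cryptographic_pairing ::
  "('a, 'c) monoid_scheme \<Rightarrow> ('b, 'd) monoid_scheme \<Rightarrow> nat \<Rightarrow> ('a \<Rightarrow> 'a \<Rightarrow> 'b) \<Rightarrow> bool" where
  "cryptographic_pairing G1 G2 p e \<longleftrightarrow>
     cyclic_of_prime_order G1 p \<and> cyclic_of_prime_order G2 p \<and>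
     (\<forall>x \<in> carrier G1. \<forall>y \<in> carrier G1. e x y \<in> carrier G2) \<and>
     (\<forall>x \<in> carrier G1. \<forall>y \<in> carrier G1. \<forall>a b :: nat.
         e (x [^]\<^bsub>G1\<^esub> a) (y [^]\<^bsub>G1\<^esub> b) = (e x y) [^]\<^bsub>G2\<^esub> (a * b)) \<and>
     (\<forall>g \<in> generators G1. e g g \<in> generators G2)"

text \<open>Adversaries are randomized algorithms, modelled by their output distributions.
  CDH adversary: input (g, g^a, g^b), output an element. One-way adversary: input (g, x).\<close>

type_synonym ('a) cdh_adversary = "'a \<Rightarrow> 'a \<Rightarrow> 'a \<Rightarrow> 'a pmf"
type_synonym ('a, 'b) ow_adversary = "'a \<Rightarrow> 'b \<Rightarrow> 'a pmf"

definition cdh_success :: "('a, 'c) monoid_scheme \<Rightarrow> nat \<Rightarrow> 'a cdh_adversary \<Rightarrow> real" where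
  "cdh_success G p A =
     measure_pmf.prob
       (bind_pmf (pmf_of_set (generators G)) (\<lambda>g.
        bind_pmf (pmf_of_set {..<p}) (\<lambda>a.
        bind_pmf (pmf_of_set {..<p}) (\<lambda>b.
        map_pmf (\<lambda>z. z = g [^]\<^bsub>G\<^esub> (a * b)) (A g (g [^]\<^bsub>G\<^esub> a) (g [^]\<^bsub>G\<^esub> b))))))
       {True}"

definition ow_success ::
  "('a, 'c) monoid_scheme \<Rightarrow> ('b, 'd) monoid_scheme \<Rightarrow> ('a \<Rightarrow> 'a \<Rightarrow> 'b) \<Rightarrow> ('a, 'b) ow_adversary \<Rightarrow> real" where
  "ow_success G1 G2 e A =
     measure_pmf.prob
       (bind_pmf (pmf_of_set (generators G1)) (\<lambda>g.
        bind_pmf (pmf_of_set (carrier G2)) (\<lambda>x.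
        map_pmf (\<lambda>y. e g y = x) (A g x))))
       {True}"

definition ow_valid :: "('a, 'c) monoid_scheme \<Rightarrow> ('b, 'd) monoid_scheme \<Rightarrow> ('a, 'b) ow_adversary \<Rightarrow> bool" where
  "ow_valid G1 G2 A \<longleftrightarrow>
     (\<forall>g \<in> carrier G1. \<forall>x \<in> carrier G2. set_pmf (A g x) \<subseteq> carrier G1)"

text \<open>time_cdh A / time_ow A is the running time of (the best implementation of) the
  algorithm A in some fixed computational model.\<close>

definition cdh_assumption ::
  "('a, 'c) monoid_scheme \<Rightarrow> nat \<Rightarrow> ('a cdh_adversary \<Rightarrow> real) \<Rightarrow> real \<Rightarrow> real \<Rightarrow> bool" where
  "cdh_assumption G p time_cdh t \<epsilon> \<longleftrightarrow>
     (\<forall>A. time_cdh A \<le> t \<longrightarrow> cdh_success G p A < \<epsilon>)"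

definition one_way_pairing ::
  "('a, 'c) monoid_scheme \<Rightarrow> ('b, 'd) monoid_scheme \<Rightarrow> ('a \<Rightarrow> 'a \<Rightarrow> 'b)
     \<Rightarrow> (('a, 'b) ow_adversary \<Rightarrow> real) \<Rightarrow> real \<Rightarrow> real \<Rightarrow> bool" where
  "one_way_pairing G1 G2 e time_ow t \<epsilon> \<longleftrightarrow>
     (\<forall>A. ow_valid G1 G2 A \<longrightarrow> time_ow A \<le> t \<longrightarrow> ow_success G1 G2 e A < \<epsilon>)"

text \<open>Straight-line expressions over G1 and G2. V1 i refers to the i-th entry of the
  environment; Pow1 e j raises to the j-th random exponent.\<close>
datatype g1expr = V1 nat | One1 | Mul1 g1expr g1expr | Inv1 g1expr | Pow1 g1expr nat

datatype g2expr = Pair g1expr g1expr | One2 | Mul2 g2expr g2expr | Inv2 g2expr | Pow2 g2expr nat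

primrec eval1 :: "('a, 'c) monoid_scheme \<Rightarrow> 'a list \<Rightarrow> (nat \<Rightarrow> nat) \<Rightarrow> g1expr \<Rightarrow> 'a" where
  "eval1 G env r (V1 i) = (if i < length env then env ! i else \<one>\<^bsub>G\<^esub>)"
| "eval1 G env r One1 = \<one>\<^bsub>G\<^esub>"
| "eval1 G env r (Mul1 x y) = eval1 G env r x \<otimes>\<^bsub>G\<^esub> eval1 G env r y"
| "eval1 G env r (Inv1 x) = inv\<^bsub>G\<^esub> (eval1 G env r x)"
| "eval1 G env r (Pow1 x j) = eval1 G env r x [^]\<^bsub>G\<^esub> r j"

primrec eval2 :: "('a, 'c) monoid_scheme \<Rightarrow> ('b, 'd) monoid_scheme \<Rightarrow> ('a \<Rightarrow> 'a \<Rightarrow> 'b)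
    \<Rightarrow> 'a list \<Rightarrow> (nat \<Rightarrow> nat) \<Rightarrow> g2expr \<Rightarrow> 'b" where
  "eval2 G1 G2 e env r (Pair x y) = e (eval1 G1 env r x) (eval1 G1 env r y)"
| "eval2 G1 G2 e env r One2 = \<one>\<^bsub>G2\<^esub>"
| "eval2 G1 G2 e env r (Mul2 x y) = eval2 G1 G2 e env r x \<otimes>\<^bsub>G2\<^esub> eval2 G1 G2 e env r y"
| "eval2 G1 G2 e env r (Inv2 x) = inv\<^bsub>G2\<^esub> (eval2 G1 G2 e env r x)"
| "eval2 G1 G2 e env r (Pow2 x j) = eval2 G1 G2 e env r x [^]\<^bsub>G2\<^esub> r j"

text \<open>A wrapper (k, pre_g, pre_x, post) turns a one-way adversary A into a CDH adversary:
  on input (g,u,v) sample k exponents r_0..r_{k-1} uniformly from Z_p, run A on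
  (pre_g, pre_x) evaluated in environment [g,u,v], obtaining y, and output post evaluated in
  environment [g,u,v,y]. It uses a single call to A plus a fixed amount of group work.\<close>
type_synonym wrapper = "nat \<times> g1expr \<times> g2expr \<times> g1expr"

definition apply_wrapper ::
  "('a, 'c) monoid_scheme \<Rightarrow> ('b, 'd) monoid_scheme \<Rightarrow> nat \<Rightarrow> ('a \<Rightarrow> 'a \<Rightarrow> 'b)
     \<Rightarrow> wrapper \<Rightarrow> ('a, 'b) ow_adversary \<Rightarrow> 'a cdh_adversary" where
  "apply_wrapper G1 G2 p e W A = (case W of (k, pg, px, po) \<Rightarrow>
     (\<lambda>g u v.
        bind_pmf (Pi_pmf {..<k} 0 (\<lambda>_. pmf_of_set {..<p})) (\<lambda>r.
        map_pmf (\<lambda>y. eval1 G1 [g, u, v, y] r po)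
          (A (eval1 G1 [g, u, v] r pg) (eval2 G1 G2 e [g, u, v] r px)))))"

text \<open>Standing assumption on the computational model: each fixed wrapper adds at most a
  constant to the running time (one call to the adversary plus O(1) group operations,
  pairing evaluations and samplings).\<close>
definition wrapper_overhead_bounded ::
  "('a, 'c) monoid_scheme \<Rightarrow> ('b, 'd) monoid_scheme \<Rightarrow> nat \<Rightarrow> ('a \<Rightarrow> 'a \<Rightarrow> 'b)
     \<Rightarrow> ('a cdh_adversary \<Rightarrow> real) \<Rightarrow> (('a, 'b) ow_adversary \<Rightarrow> real) \<Rightarrow> bool" where
  "wrapper_overhead_bounded G1 G2 p e time_cdh time_ow \<longleftrightarrow>
     (\<forall>W :: wrapper. \<exists>c :: real. \<forall>A.
        time_cdh (apply_wrapper G1 G2 p e W A) \<le> time_ow A + c)"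

end

theory Submission
  imports Defs "HOL-Algebra.Multiplicative_Group"
begin

text \<open>On input \<open>(g, g^a, g^b)\<close>, draw a uniform exponent \<open>r\<close> and ask the inverter for a
  preimage of \<open>x = e(g^a, g^b) e(g, g)^r = e(g, g)^(ab + r)\<close> under \<open>e(g, -)\<close>. Since \<open>e(g, g)\<close>
  generates the target group, \<open>x\<close> is uniform there, exactly as in the one-way experiment; and
  since \<open>e(g, -)\<close> is injective, the inverter succeeds iff its answer is \<open>g^(ab + r)\<close>, i.e. iff
  \<open>y g^(-r) = g^(ab)\<close>. So this wrapper, which makes a single call, has exactly the inverter's
  success probability.\<close>

lemma (in group) nat_pow_eq_iff_mod_ord:
  assumes "x \<in> carrier G"
  shows "x [^] (m::nat) = x [^] (n::nat) \<longleftrightarrow> m mod ord x = n mod ord x"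
proof -
  have "x [^] m = x [^] n \<longleftrightarrow> x [^] int m = x [^] int n"
    by (simp add: int_pow_int)
  also have "\<dots> \<longleftrightarrow> int (ord x) dvd int n - int m"
    using assms by (rule int_pow_eq)
  also have "\<dots> \<longleftrightarrow> m mod ord x = n mod ord x"
    by (metis mod_eq_dvd_iff of_nat_eq_iff zmod_int)
  finally show ?thesis .
qed

lemma (in group) map_pmf_of_set_carrier_mult_left:
  assumes "finite (carrier G)" "x \<in> carrier G"
  shows "map_pmf (\<lambda>y. x \<otimes> y) (pmf_of_set (carrier G)) = pmf_of_set (carrier G)"
proof (rule map_pmf_of_set_bij_betw)
  show "bij_betw (\<lambda>y. x \<otimes> y) (carrier G) (carrier G)"
    using assms(2) by (intro bij_betwI[where g = "\<lambda>y. inv x \<otimes> y"]) (auto simp: m_assoc [symmetric])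
qed (use assms(1) in auto)

lemma cyclic_of_prime_order_generatorD:
  assumes "cyclic_of_prime_order G p" "g \<in> generators G"
  shows "group G" "g \<in> carrier G" "group.ord G g = p" "p > 0"
proof -
  show "group G" "g \<in> carrier G" "p > 0"
    using assms by (auto simp: cyclic_of_prime_order_def generators_def prime_gt_0_nat)
  then show "group.ord G g = p"
    using assms group.generate_pow_card[of G g]
    by (auto simp: cyclic_of_prime_order_def generators_def)
qed

lemma bij_betw_generator_pow:
  fixes G :: "('a, 'b) monoid_scheme" (structure)
  assumes G: "cyclic_of_prime_order G p" and g: "g \<in> generators G"
  shows "bij_betw (\<lambda>k. g [^]\<^bsub>G\<^esub> k) {..<p} (carrier G)"
proof -
  interpret group G using cyclic_of_prime_order_generatorD[OF G g] by simp
  have gc: "g \<in> carrier G" and ord: "ord g = p" using cyclic_of_prime_order_generatorD[OF G g] by auto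
  have inj: "inj_on (\<lambda>k. g [^] k) {..<p}"
    by (rule inj_onI) (simp add: nat_pow_eq_iff_mod_ord[OF gc] ord)
  have "(\<lambda>k. g [^] k) ` {..<p} \<subseteq> carrier G"
    using gc by auto
  moreover have "card ((\<lambda>k. g [^] k) ` {..<p}) = card (carrier G)"
    using G card_image[OF inj] by (simp add: cyclic_of_prime_order_def)
  ultimately have "(\<lambda>k. g [^] k) ` {..<p} = carrier G"
    using G by (intro card_subset_eq) (auto simp: cyclic_of_prime_order_def)
  with inj show ?thesis
    by (simp add: bij_betw_def)
qed

lemma map_pmf_generator_pow_shift:
  fixes G :: "('a, 'b) monoid_scheme" (structure)
  assumes G: "cyclic_of_prime_order G p" and g: "g \<in> generators G"
  shows "map_pmf (\<lambda>r. g [^]\<^bsub>G\<^esub> (c + r)) (pmf_of_set {..<p}) = pmf_of_set (carrier G)"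
proof -
  interpret group G using cyclic_of_prime_order_generatorD[OF G g] by simp
  have gc: "g \<in> carrier G" and p: "p > 0" using cyclic_of_prime_order_generatorD[OF G g] by auto
  have fin: "finite (carrier G)" using G by (simp add: cyclic_of_prime_order_def)
  have "map_pmf (\<lambda>r. g [^] (c + r)) (pmf_of_set {..<p})
      = map_pmf (\<lambda>y. g [^] c \<otimes> y) (map_pmf (\<lambda>r. g [^] r) (pmf_of_set {..<p}))"
    using gc by (simp add: pmf.map_comp o_def nat_pow_mult)
  also have "map_pmf (\<lambda>r. g [^] r) (pmf_of_set {..<p}) = pmf_of_set (carrier G)"
    using bij_betw_generator_pow[OF G g] p by (intro map_pmf_of_set_bij_betw) auto
  also have "map_pmf (\<lambda>y. g [^] c \<otimes> y) (pmf_of_set (carrier G)) = pmf_of_set (carrier G)"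
    using fin gc by (intro map_pmf_of_set_carrier_mult_left) auto
  finally show ?thesis .
qed

definition cdh_reduction :: wrapper where
  "cdh_reduction = (1, V1 0, Mul2 (Pair (V1 1) (V1 2)) (Pow2 (Pair (V1 0) (V1 0)) 0),
                    Mul1 (V1 3) (Inv1 (Pow1 (V1 0) 0)))"

lemma apply_wrapper_cdh_reduction:
  "apply_wrapper G1 G2 p e cdh_reduction A g u v =
     bind_pmf (pmf_of_set {..<p}) (\<lambda>r.
       map_pmf (\<lambda>y. y \<otimes>\<^bsub>G1\<^esub> inv\<^bsub>G1\<^esub> (g [^]\<^bsub>G1\<^esub> r))
         (A g (e u v \<otimes>\<^bsub>G2\<^esub> e g g [^]\<^bsub>G2\<^esub> r)))"
  by (simp add: apply_wrapper_def cdh_reduction_def Pi_pmf_singleton bind_map_pmf lessThan_Suc)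

context
  fixes G1 :: "('a, 'c) monoid_scheme" and G2 :: "('b, 'd) monoid_scheme"
    and p :: nat and e :: "'a \<Rightarrow> 'a \<Rightarrow> 'b"
  assumes pairing: "cryptographic_pairing G1 G2 p e"
begin

lemma pairing_generator_pow:
  assumes g: "g \<in> generators G1"
  shows "e (g [^]\<^bsub>G1\<^esub> (a::nat)) (g [^]\<^bsub>G1\<^esub> (b::nat)) = e g g [^]\<^bsub>G2\<^esub> (a * b)"
proof -
  have "g \<in> carrier G1"
    using pairing cyclic_of_prime_order_generatorD(2)[OF _ g] by (auto simp: cryptographic_pairing_def)
  with pairing show ?thesis
    unfolding cryptographic_pairing_def by blast
qed

lemma inj_on_pairing_generator:
  assumes g: "g \<in> generators G1"
  shows "inj_on (e g) (carrier G1)"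
proof (rule inj_onI)
  have G1: "cyclic_of_prime_order G1 p" and G2: "cyclic_of_prime_order G2 p"
    and h: "e g g \<in> generators G2"
    using pairing g by (auto simp: cryptographic_pairing_def)
  interpret G1: group G1 using cyclic_of_prime_order_generatorD[OF G1 g] by simp
  interpret G2: group G2 using cyclic_of_prime_order_generatorD[OF G2 h] by simp
  have gc: "g \<in> carrier G1" using cyclic_of_prime_order_generatorD[OF G1 g] by simp
  have e_pow: "e g (g [^]\<^bsub>G1\<^esub> k) = e g g [^]\<^bsub>G2\<^esub> k" for k :: nat
    using pairing_generator_pow[OF g, of 1 k] gc by simp
  fix y y' assume "y \<in> carrier G1" "y' \<in> carrier G1" and eq: "e g y = e g y'"
  then obtain k k' :: nat where y: "y = g [^]\<^bsub>G1\<^esub> k" and y': "y' = g [^]\<^bsub>G1\<^esub> k'"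
    using bij_betw_generator_pow[OF G1 g] unfolding bij_betw_def by blast
  have "k mod p = k' mod p"
    using eq cyclic_of_prime_order_generatorD[OF G2 h] by (simp add: y y' e_pow G2.nat_pow_eq_iff_mod_ord)
  then show "y = y'"
    using cyclic_of_prime_order_generatorD[OF G1 g] by (simp add: y y' G1.nat_pow_eq_iff_mod_ord)
qed

lemma cdh_reduction_query:
  fixes a b r :: nat
  assumes g: "g \<in> generators G1"
  shows "e (g [^]\<^bsub>G1\<^esub> a) (g [^]\<^bsub>G1\<^esub> b) \<otimes>\<^bsub>G2\<^esub> e g g [^]\<^bsub>G2\<^esub> r
           = e g g [^]\<^bsub>G2\<^esub> (a * b + r)"
proof -
  have "e g g \<in> generators G2"
    using pairing g by (auto simp: cryptographic_pairing_def)
  then have "group G2" "e g g \<in> carrier G2"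
    using pairing cyclic_of_prime_order_generatorD by (auto simp: cryptographic_pairing_def)
  then show ?thesis
    by (simp add: pairing_generator_pow[OF g] group.is_monoid monoid.nat_pow_mult)
qed

lemma cdh_reduction_output_correct:
  fixes a b r :: nat
  assumes g: "g \<in> generators G1" and y: "y \<in> carrier G1"
  shows "y \<otimes>\<^bsub>G1\<^esub> inv\<^bsub>G1\<^esub> (g [^]\<^bsub>G1\<^esub> r) = g [^]\<^bsub>G1\<^esub> (a * b)
           \<longleftrightarrow> e g y = e g g [^]\<^bsub>G2\<^esub> (a * b + r)"
proof -
  have G1: "cyclic_of_prime_order G1 p"
    using pairing by (simp add: cryptographic_pairing_def)
  interpret G1: group G1 using cyclic_of_prime_order_generatorD[OF G1 g] by simp
  have gc: "g \<in> carrier G1" using cyclic_of_prime_order_generatorD[OF G1 g] by simp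
  have "y \<otimes>\<^bsub>G1\<^esub> inv\<^bsub>G1\<^esub> (g [^]\<^bsub>G1\<^esub> r) = g [^]\<^bsub>G1\<^esub> (a * b)
          \<longleftrightarrow> y = g [^]\<^bsub>G1\<^esub> (a * b + r)"
    using gc y by (simp add: G1.inv_solve_right' G1.nat_pow_mult [symmetric])
  also have "\<dots> \<longleftrightarrow> e g y = e g (g [^]\<^bsub>G1\<^esub> (a * b + r))"
    using inj_on_pairing_generator[OF g] gc y by (auto dest: inj_onD)
  also have "e g (g [^]\<^bsub>G1\<^esub> (a * b + r)) = e g g [^]\<^bsub>G2\<^esub> (a * b + r)"
    using pairing_generator_pow[OF g, of 1] gc by simp
  finally show ?thesis .
qed

lemma cdh_reduction_experiment:
  fixes a b :: nat
  assumes A: "ow_valid G1 G2 A" and g: "g \<in> generators G1"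
  shows "map_pmf (\<lambda>z. z = g [^]\<^bsub>G1\<^esub> (a * b))
           (apply_wrapper G1 G2 p e cdh_reduction A g (g [^]\<^bsub>G1\<^esub> a) (g [^]\<^bsub>G1\<^esub> b))
         = bind_pmf (pmf_of_set (carrier G2)) (\<lambda>x. map_pmf (\<lambda>y. e g y = x) (A g x))"
proof -
  have G1: "cyclic_of_prime_order G1 p" and G2: "cyclic_of_prime_order G2 p"
    and h: "e g g \<in> generators G2"
    using pairing g by (auto simp: cryptographic_pairing_def)
  have gc: "g \<in> carrier G1" using cyclic_of_prime_order_generatorD[OF G1 g] by simp
  have hc: "e g g \<in> carrier G2" using cyclic_of_prime_order_generatorD[OF G2 h] by simp
  interpret G2: group G2 using cyclic_of_prime_order_generatorD[OF G2 h] by simp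
  let ?x = "\<lambda>r. e g g [^]\<^bsub>G2\<^esub> (a * b + r)"
  have "map_pmf (\<lambda>z. z = g [^]\<^bsub>G1\<^esub> (a * b))
          (apply_wrapper G1 G2 p e cdh_reduction A g (g [^]\<^bsub>G1\<^esub> a) (g [^]\<^bsub>G1\<^esub> b))
        = bind_pmf (pmf_of_set {..<p}) (\<lambda>r. map_pmf
            (\<lambda>y. y \<otimes>\<^bsub>G1\<^esub> inv\<^bsub>G1\<^esub> (g [^]\<^bsub>G1\<^esub> r) = g [^]\<^bsub>G1\<^esub> (a * b)) (A g (?x r)))"
    by (simp add: apply_wrapper_cdh_reduction cdh_reduction_query[OF g] map_bind_pmf
        pmf.map_comp o_def)
  also have "\<dots> = bind_pmf (pmf_of_set {..<p}) (\<lambda>r. map_pmf (\<lambda>y. e g y = ?x r) (A g (?x r)))"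
  proof (intro bind_pmf_cong map_pmf_cong refl)
    fix r y assume "y \<in> set_pmf (A g (?x r))"
    then have "y \<in> carrier G1"
      using A gc hc unfolding ow_valid_def by blast
    then show "(y \<otimes>\<^bsub>G1\<^esub> inv\<^bsub>G1\<^esub> (g [^]\<^bsub>G1\<^esub> r) = g [^]\<^bsub>G1\<^esub> (a * b)) = (e g y = ?x r)"
      by (rule cdh_reduction_output_correct[OF g])
  qed
  also have "\<dots> = bind_pmf (map_pmf ?x (pmf_of_set {..<p})) (\<lambda>x. map_pmf (\<lambda>y. e g y = x) (A g x))"
    by (simp add: bind_map_pmf)
  also have "map_pmf ?x (pmf_of_set {..<p}) = pmf_of_set (carrier G2)"
    by (rule map_pmf_generator_pow_shift[OF G2 h])
  finally show ?thesis .
qed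

lemma cdh_success_cdh_reduction:
  assumes A: "ow_valid G1 G2 A"
  shows "cdh_success G1 p (apply_wrapper G1 G2 p e cdh_reduction A) = ow_success G1 G2 e A"
proof -
  have G1: "cyclic_of_prime_order G1 p"
    using pairing by (simp add: cryptographic_pairing_def)
  then have "finite (generators G1)" "generators G1 \<noteq> {}"
    by (auto simp: cyclic_of_prime_order_def generators_def)
  then have "g \<in> generators G1" if "g \<in> set_pmf (pmf_of_set (generators G1))" for g
    using that by simp
  then show ?thesis
    unfolding cdh_success_def ow_success_def
    by (intro arg_cong[where f = "\<lambda>M. measure_pmf.prob M {True}"] bind_pmf_cong refl)
       (simp add: cdh_reduction_experiment[OF A])
qed

end

theorem propositionC1:
  fixes G1 :: "'a monoid" and G2 :: "'b monoid" and p :: nat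
    and e :: "'a \<Rightarrow> 'a \<Rightarrow> 'b"
    and time_cdh :: "'a cdh_adversary \<Rightarrow> real"
    and time_ow :: "('a, 'b) ow_adversary \<Rightarrow> real"
  assumes "cryptographic_pairing G1 G2 p e"
    and "wrapper_overhead_bounded G1 G2 p e time_cdh time_ow"
  shows "\<exists>c :: real. \<forall>t \<epsilon>.
           cdh_assumption G1 p time_cdh t \<epsilon> \<longrightarrow> one_way_pairing G1 G2 e time_ow (t - c) \<epsilon>"
proof -
  obtain c where overhead: "\<And>A. time_cdh (apply_wrapper G1 G2 p e cdh_reduction A) \<le> time_ow A + c"
    using assms(2) unfolding wrapper_overhead_bounded_def by blast
  have "one_way_pairing G1 G2 e time_ow (t - c) \<epsilon>" if cdh: "cdh_assumption G1 p time_cdh t \<epsilon>" for t \<epsilon>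
    unfolding one_way_pairing_def
  proof (intro allI impI)
    fix A assume valid: "ow_valid G1 G2 A" and "time_ow A \<le> t - c"
    then have "time_cdh (apply_wrapper G1 G2 p e cdh_reduction A) \<le> t"
      using overhead[of A] by linarith
    then have "cdh_success G1 p (apply_wrapper G1 G2 p e cdh_reduction A) < \<epsilon>"
      using cdh unfolding cdh_assumption_def by blast
    then show "ow_success G1 G2 e A < \<epsilon>"
      by (simp add: cdh_success_cdh_reduction[OF assms(1) valid])
  qed
  then show ?thesis by blast
qed

end
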